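(* Let $S$ be a set, let $f:2^S\to 2^S$ be monotonic with respect to $\subseteq$, and let $\mathcal{W}\subseteq 2^S$ be a set of subsets of $S$ each of which is well-supported for $f$. Then $\bigcup\mathcal{W}$ is well-supported for $f$.
   Context: The Axiom of Choice is assumed. For a binary relation ${\prec}$ on $X$ and $x\in X$, $\prec^{-1}(x)=\{x'\in X\mid x'\prec x\}$. A pair $(X,\prec)$ is a support ordering for $f$ if $X\subseteq S$, ${\prec}\subseteq X\times X$, and $x\in f(\prec^{-1}(x))$ for every $x\in X$. A relation is well-founded if every nonempty subset $Y$ of its carrier has an element $y$ such that no $y'\in Y$, $y'\neq y$, satisfies $y'\prec y$. A set $X\subseteq S$ is well-supported for $f$ if there is a well-founded ${\prec}\subseteq X\times X$ such that $(X,\prec)$ is a support ordering for $f$. *)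

theory Defs
  imports Main
begin

definition pred_set :: "('a \<times> 'a) set \<Rightarrow> 'a \<Rightarrow> 'a set" where
  "pred_set r x = {x'. (x', x) \<in> r}"

definition support_ordering ::
  "'a set \<Rightarrow> ('a set \<Rightarrow> 'a set) \<Rightarrow> 'a set \<Rightarrow> ('a \<times> 'a) set \<Rightarrow> bool" where
  "support_ordering S f X r \<longleftrightarrow>
     X \<subseteq> S \<and> r \<subseteq> X \<times> X \<and> (\<forall>x\<in>X. x \<in> f (pred_set r x))"

definition wf_on_carrier :: "'a set \<Rightarrow> ('a \<times> 'a) set \<Rightarrow> bool" where
  "wf_on_carrier X r \<longleftrightarrow>
     (\<forall>Y. Y \<subseteq> X \<and> Y \<noteq> {} \<longrightarrow> (\<exists>y\<in>Y. \<forall>y'\<in>Y. y' \<noteq> y \<longrightarrow> (y', y) \<notin> r))"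

definition well_supported :: "'a set \<Rightarrow> ('a set \<Rightarrow> 'a set) \<Rightarrow> 'a set \<Rightarrow> bool" where
  "well_supported S f X \<longleftrightarrow>
     (\<exists>r. r \<subseteq> X \<times> X \<and> wf_on_carrier X r \<and> support_ordering S f X r)"

end

theory Submission
  imports Defs
begin

text \<open>Well-order \<open>W\<close> and charge each point of \<open>\<Union>W\<close> to the least member of \<open>W\<close> containing it.
  Order \<open>\<Union>W\<close> lexicographically: first by the charged set, then, inside one set, by its own
  well-founded support ordering. This is well-founded, and every predecessor of \<open>x\<close> in the
  ordering of its own set is still a predecessor in the glued ordering, because such a predecessor
  lies in that set and is therefore charged to it or to an earlier one. Monotonicity of \<open>f\<close> then
  transfers the support property.\<close>

lemma wf_on_carrier_iff_wf_Diff_Id: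
  assumes "r \<subseteq> X \<times> X"
  shows "wf_on_carrier X r \<longleftrightarrow> wf (r - Id)"
proof
  assume wfc: "wf_on_carrier X r"
  show "wf (r - Id)"
  proof (rule wfI_min)
    fix x and Q :: "'a set" assume "x \<in> Q"
    show "\<exists>z\<in>Q. \<forall>y. (y, z) \<in> r - Id \<longrightarrow> y \<notin> Q"
    proof (cases "Q \<inter> X = {}")
      case True
      then show ?thesis using \<open>x \<in> Q\<close> assms by blast
    next
      case False
      with wfc obtain z where "z \<in> Q \<inter> X" "\<forall>y\<in>Q \<inter> X. y \<noteq> z \<longrightarrow> (y, z) \<notin> r"
        unfolding wf_on_carrier_def by (meson inf_le2)
      then show ?thesis using assms by blast
    qed
  qed
next
  assume wf: "wf (r - Id)"
  show "wf_on_carrier X r"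
    unfolding wf_on_carrier_def
  proof (intro allI impI)
    fix Y assume "Y \<subseteq> X \<and> Y \<noteq> {}"
    then obtain y where "y \<in> Y" by blast
    with wf show "\<exists>y\<in>Y. \<forall>y'\<in>Y. y' \<noteq> y \<longrightarrow> (y', y) \<notin> r"
      by (rule wfE_min) blast
  qed
qed

lemma wf_lex_by_index:
  assumes "wf L" and "\<And>i. i \<in> I \<Longrightarrow> wf (R i)"
  shows "wf {(x', x). (idx x', idx x) \<in> L \<or> idx x' = idx x \<and> idx x \<in> I \<and> (x', x) \<in> R (idx x)}"
proof -
  let ?lex = "inv_image L fst \<union> same_fst (\<lambda>i. i \<in> I) R"
  have "wf ?lex"
  proof (rule wf_union_compatible)
    show "wf (inv_image L fst)" using \<open>wf L\<close> by (rule wf_inv_image)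
    show "wf (same_fst (\<lambda>i. i \<in> I) R)" using assms(2) by (rule wf_same_fst)
    show "inv_image L fst O same_fst (\<lambda>i. i \<in> I) R \<subseteq> inv_image L fst"
      by (auto simp: same_fst_def)
  qed
  then have "wf (inv_image ?lex (\<lambda>x. (idx x, x)))"
    by (rule wf_inv_image)
  then show ?thesis
    by (rule wf_subset) (auto simp: same_fst_def)
qed

lemma ex_wf_total: "\<exists>L :: 'a rel. wf L \<and> total L"
proof -
  obtain R :: "'a rel" where "well_order_on UNIV R"
    using well_order_on by blast
  then have "wf (R - Id) \<and> total (R - Id)"
    unfolding well_order_on_def linear_order_on_def by simp
  then show ?thesis by blast
qed

lemma least_member_choice:
  assumes "wf L" and "total L"
  obtains idx where "\<And>x. x \<in> \<Union>W \<Longrightarrow> idx x \<in> W \<and> x \<in> idx x"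
    and "\<And>x X. X \<in> W \<Longrightarrow> x \<in> X \<Longrightarrow> (idx x, X) \<in> L \<or> idx x = X"
proof -
  have "\<forall>x\<in>\<Union>W. \<exists>Z. Z \<in> W \<and> x \<in> Z \<and> (\<forall>X\<in>W. x \<in> X \<longrightarrow> (Z, X) \<in> L \<or> Z = X)"
  proof
    fix x assume "x \<in> \<Union>W"
    then obtain X0 where "X0 \<in> {X \<in> W. x \<in> X}" by blast
    with \<open>wf L\<close> obtain Z where "Z \<in> {X \<in> W. x \<in> X}"
      and "\<And>X. (X, Z) \<in> L \<Longrightarrow> X \<notin> {X \<in> W. x \<in> X}"
      by (rule wfE_min) blast
    then show "\<exists>Z. Z \<in> W \<and> x \<in> Z \<and> (\<forall>X\<in>W. x \<in> X \<longrightarrow> (Z, X) \<in> L \<or> Z = X)"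
      using \<open>total L\<close> unfolding total_on_def by blast
  qed
  from bchoice[OF this] obtain idx
    where "\<forall>x\<in>\<Union>W. idx x \<in> W \<and> x \<in> idx x \<and> (\<forall>X\<in>W. x \<in> X \<longrightarrow> (idx x, X) \<in> L \<or> idx x = X)"
    by blast
  then show thesis
    by (intro that) blast+
qed

lemma well_supported_Union_by_index:
  assumes f_mono: "\<And>A B. A \<subseteq> B \<Longrightarrow> B \<subseteq> S \<Longrightarrow> f A \<subseteq> f B"
    and "wf L"
    and rr: "\<And>X. X \<in> W \<Longrightarrow> wf_on_carrier X (rr X) \<and> support_ordering S f X (rr X)"
    and idx_mem: "\<And>x. x \<in> \<Union>W \<Longrightarrow> idx x \<in> W \<and> x \<in> idx x"
    and idx_least: "\<And>x X. X \<in> W \<Longrightarrow> x \<in> X \<Longrightarrow> (idx x, X) \<in> L \<or> idx x = X"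
  shows "well_supported S f (\<Union>W)"
proof -
  define r where "r = {(x', x). x' \<in> \<Union>W \<and> x \<in> \<Union>W \<and>
    ((idx x', idx x) \<in> L \<or> idx x' = idx x \<and> (x', x) \<in> rr (idx x))}"
  have r_sub: "r \<subseteq> \<Union>W \<times> \<Union>W"
    unfolding r_def by blast
  have Union_sub: "\<Union>W \<subseteq> S"
    using rr unfolding support_ordering_def by blast
  have "wf (rr X - Id)" if "X \<in> W" for X
    using rr[OF that] wf_on_carrier_iff_wf_Diff_Id unfolding support_ordering_def by blast
  then have "wf {(x', x). (idx x', idx x) \<in> L \<or>
      idx x' = idx x \<and> idx x \<in> W \<and> (x', x) \<in> rr (idx x) - Id}"
    using \<open>wf L\<close> by (intro wf_lex_by_index)
  moreover have "r - Id \<subseteq> {(x', x). (idx x', idx x) \<in> L \<or>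
      idx x' = idx x \<and> idx x \<in> W \<and> (x', x) \<in> rr (idx x) - Id}"
    using idx_mem unfolding r_def by auto
  ultimately have "wf_on_carrier (\<Union>W) r"
    using r_sub wf_on_carrier_iff_wf_Diff_Id wf_subset by blast
  moreover have "x \<in> f (pred_set r x)" if x: "x \<in> \<Union>W" for x
  proof -
    have X: "idx x \<in> W" "rr (idx x) \<subseteq> idx x \<times> idx x" "x \<in> f (pred_set (rr (idx x)) x)"
      using idx_mem[OF x] rr unfolding support_ordering_def by blast+
    have "pred_set (rr (idx x)) x \<subseteq> pred_set r x"
      using X(1,2) idx_least x unfolding pred_set_def r_def by blast
    moreover have "pred_set r x \<subseteq> S"
      using r_sub Union_sub unfolding pred_set_def by blast
    ultimately show ?thesis
      using X(3) f_mono by blast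
  qed
  ultimately show ?thesis
    unfolding well_supported_def support_ordering_def using r_sub Union_sub by blast
qed

theorem lemma7:
  fixes S :: "'a set" and f :: "'a set \<Rightarrow> 'a set" and W :: "'a set set"
  assumes f_maps: "\<And>A. A \<subseteq> S \<Longrightarrow> f A \<subseteq> S"
    and f_mono: "\<And>A B. A \<subseteq> B \<Longrightarrow> B \<subseteq> S \<Longrightarrow> f A \<subseteq> f B"
    and W_ws: "\<And>X. X \<in> W \<Longrightarrow> well_supported S f X"
  shows "well_supported S f (\<Union>W)"
proof -
  have "\<forall>X\<in>W. \<exists>r. wf_on_carrier X r \<and> support_ordering S f X r"
    using W_ws unfolding well_supported_def by blast
  from bchoice[OF this] obtain rr
    where rr: "\<forall>X\<in>W. wf_on_carrier X (rr X) \<and> support_ordering S f X (rr X)"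
    by blast
  obtain L :: "'a set rel" where "wf L" "total L"
    using ex_wf_total by blast
  obtain idx where idx_mem: "\<And>x. x \<in> \<Union>W \<Longrightarrow> idx x \<in> W \<and> x \<in> idx x"
    and idx_least: "\<And>x X. X \<in> W \<Longrightarrow> x \<in> X \<Longrightarrow> (idx x, X) \<in> L \<or> idx x = X"
    using least_member_choice[OF \<open>wf L\<close> \<open>total L\<close>, of W] by blast
  show ?thesis
    using f_mono \<open>wf L\<close> rr[rule_format] idx_mem idx_least
    by (rule well_supported_Union_by_index)
qed

end
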